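(* Every nice graph $G=(V,E)$ with $V\neq\emptyset$ has a good subset.
   Context: All graphs are finite and simple. An edge is isolated if both its ends have degree $1$; a graph is nice if it has no isolated edges. For $J\subseteq V$: $E_{J,2}$ is the set of isolated edges of $G-J$; $E_{J,3}$ the set of edges with exactly one end in $J$; $E_{J,4}$ the set of edges with both ends in $J$; $G_{J,3}=(V,E_{J,3})$ and $G_{J,4}=(J,E_{J,4})$. For $i\in V\setminus J$, if $N_{G_{J,3}}(i)=\{j\}$ then $i$ is a private neighbour of $j$. A set $J\subseteq V$ is a good subset if $J\neq\emptyset$ and: (J1) $G_{J,4}$ has maximum degree at most $1$; (J2) $G_{J,3}$ has no isolated edges; (J3) each $j\in J$ has at most one private neighbour; (J4) for each edge $e=\{j,j'\}\in E_{J,4}$ there is a vertex $i_e\in V\setminus J$ with $\{j,j'\}\subseteq N_{G_{J,3}}(i_e)$, neither $j$ nor $j'$ has a private neighbour, and $i_e\neq i_{e'}$ for distinct $e,e'\in E_{J,4}$; (J5) for every edge $e\in E_{J,2}$, each end vertex of $e$ has at least one neighbour in $J$. *)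

theory Defs
  imports Main
begin

definition simple_graph :: "'a set \<Rightarrow> 'a set set \<Rightarrow> bool" where
  "simple_graph V E \<longleftrightarrow> finite V \<and> (\<forall>e\<in>E. e \<subseteq> V \<and> card e = 2)"

definition nbrs :: "'a set set \<Rightarrow> 'a \<Rightarrow> 'a set" where
  "nbrs E v = {u. {u, v} \<in> E}"

definition deg :: "'a set set \<Rightarrow> 'a \<Rightarrow> nat" where
  "deg E v = card (nbrs E v)"

definition isolated_edge :: "'a set set \<Rightarrow> 'a set \<Rightarrow> bool" where
  "isolated_edge E e \<longleftrightarrow> e \<in> E \<and> (\<forall>v\<in>e. deg E v = 1)"

definition nice :: "'a set \<Rightarrow> 'a set set \<Rightarrow> bool" where
  "nice V E \<longleftrightarrow> simple_graph V E \<and> (\<forall>e\<in>E. \<not> isolated_edge E e)"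

definition del_edges :: "'a set set \<Rightarrow> 'a set \<Rightarrow> 'a set set" where
  "del_edges E J = {e \<in> E. e \<inter> J = {}}"

definition E2 :: "'a set set \<Rightarrow> 'a set \<Rightarrow> 'a set set" where
  "E2 E J = {e. isolated_edge (del_edges E J) e}"

definition E3 :: "'a set set \<Rightarrow> 'a set \<Rightarrow> 'a set set" where
  "E3 E J = {e \<in> E. card (e \<inter> J) = 1}"

definition E4 :: "'a set set \<Rightarrow> 'a set \<Rightarrow> 'a set set" where
  "E4 E J = {e \<in> E. e \<subseteq> J}"

definition private_nbr :: "'a set \<Rightarrow> 'a set set \<Rightarrow> 'a set \<Rightarrow> 'a \<Rightarrow> 'a \<Rightarrow> bool" where
  "private_nbr V E J i j \<longleftrightarrow> i \<in> V - J \<and> nbrs (E3 E J) i = {j}"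

definition good_subset :: "'a set \<Rightarrow> 'a set set \<Rightarrow> 'a set \<Rightarrow> bool" where
  "good_subset V E J \<longleftrightarrow>
     J \<subseteq> V \<and> J \<noteq> {} \<and>
     \<comment> \<open>(J1)\<close> (\<forall>j\<in>J. deg (E4 E J) j \<le> 1) \<and>
     \<comment> \<open>(J2)\<close> (\<forall>e. \<not> isolated_edge (E3 E J) e) \<and>
     \<comment> \<open>(J3)\<close> (\<forall>j\<in>J. card {i. private_nbr V E J i j} \<le> 1) \<and>
     \<comment> \<open>(J4)\<close> (\<exists>ie. inj_on ie (E4 E J) \<and>
          (\<forall>e\<in>E4 E J. ie e \<in> V - J \<and> e \<subseteq> nbrs (E3 E J) (ie e) \<and>
             (\<forall>j\<in>e. \<not> (\<exists>i. private_nbr V E J i j)))) \<and>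
     \<comment> \<open>(J5)\<close> (\<forall>e\<in>E2 E J. \<forall>v\<in>e. \<exists>j\<in>J. {v, j} \<in> E)"

end

theory Submission
  imports Defs "HOL-Library.Product_Lexorder"
begin

text \<open>Call J admissible if J satisfies (J1) and the first half of (J4): the edges inside J form a
  matching, and every such edge e has its own witness i_e outside J adjacent to both ends of e.
  The empty set is admissible, so there is an admissible J maximising, lexicographically,
  |J| - |E_{J,4}|, then |J|, then the degree sum over J. Each remaining condition of a good subset
  is forced by this maximality: if it failed, one of a few local moves (add an undominated vertex,
  exchange a vertex of J for one of its private neighbours, or replace a vertex with two private
  neighbours by both of them) would produce an admissible set of larger potential. Niceness of G
  enters only in (J2), where it makes the exchange raise the degree sum.\<close>

locale finite_simple_graph =
  fixes V :: "'a set" and E :: "'a set set"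
  assumes simple: "simple_graph V E"
begin

lemma finite_V: "finite V"
  using simple by (simp add: simple_graph_def)

lemma edge_subset: "e \<in> E \<Longrightarrow> e \<subseteq> V"
  using simple by (simp add: simple_graph_def)

lemma edge_obtain:
  assumes "e \<in> E"
  obtains x y where "e = {x, y}" "x \<noteq> y"
  using assms simple by (auto simp: simple_graph_def card_2_iff)

lemma edge_ends: "{u, v} \<in> E \<Longrightarrow> u \<noteq> v \<and> u \<in> V \<and> v \<in> V"
  by (metis edge_obtain edge_subset doubleton_eq_iff insert_subset)

lemma finite_E: "finite E"
  using finite_V edge_subset by (meson Pow_iff finite_Pow_iff finite_subset subsetI)

lemma finite_nbrs: "F \<subseteq> E \<Longrightarrow> finite (nbrs F v)"
  using finite_V edge_ends by (auto simp: nbrs_def intro: finite_subset)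

definition Jnbrs :: "'a set \<Rightarrow> 'a \<Rightarrow> 'a set" where
  "Jnbrs J v = {w \<in> J. {w, v} \<in> E}"

lemma singleton_not_edge: "{v} \<notin> E"
  using edge_ends[of v v] by auto

lemma Jnbrs_insert [simp]:
  "Jnbrs (insert w A) v = (if {w, v} \<in> E then insert w (Jnbrs A v) else Jnbrs A v)"
  by (auto simp: Jnbrs_def)

lemma Jnbrs_Diff [simp]: "Jnbrs (A - B) v = Jnbrs A v - B"
  by (auto simp: Jnbrs_def)

lemma finite_Jnbrs: "finite (Jnbrs J v)"
  using finite_V edge_ends by (auto simp: Jnbrs_def intro: finite_subset)

lemma card_edge_Int_outside: "v \<notin> J \<Longrightarrow> card ({u, v} \<inter> J) = 1 \<longleftrightarrow> u \<in> J"
  by (cases "u \<in> J") auto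

lemma card_edge_Int_inside: "v \<in> J \<Longrightarrow> u \<noteq> v \<Longrightarrow> card ({u, v} \<inter> J) = 1 \<longleftrightarrow> u \<notin> J"
  by (cases "u \<in> J") auto

lemma nbrs_E3_outside: "v \<notin> J \<Longrightarrow> nbrs (E3 E J) v = Jnbrs J v"
  unfolding nbrs_def E3_def Jnbrs_def using card_edge_Int_outside[of v J] by blast

lemma nbrs_E3_inside: "v \<in> J \<Longrightarrow> nbrs (E3 E J) v = {u. u \<notin> J \<and> {u, v} \<in> E}"
  unfolding nbrs_def E3_def using card_edge_Int_inside[of v J] edge_ends by blast

lemma nbrs_E4: "nbrs (E4 E J) v = (if v \<in> J then Jnbrs J v else {})"
  by (auto simp: nbrs_def E4_def Jnbrs_def)

lemma private_nbr_iff: "private_nbr V E J i j \<longleftrightarrow> i \<in> V - J \<and> Jnbrs J i = {j}"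
  by (cases "i \<in> J") (simp_all add: private_nbr_def nbrs_E3_outside)

lemma E3_obtain:
  assumes "e \<in> E3 E J"
  obtains x y where "e = {x, y}" "{x, y} \<in> E" "x \<in> J" "y \<notin> J"
proof -
  have e: "e \<in> E" "card (e \<inter> J) = 1"
    using assms by (simp_all add: E3_def)
  obtain p q where pq: "e = {p, q}" "p \<noteq> q"
    using e(1) by (rule edge_obtain)
  have "p \<in> J \<and> q \<notin> J \<or> q \<in> J \<and> p \<notin> J"
  proof (cases "p \<in> J")
    case True
    thus ?thesis using card_edge_Int_inside[of p J q] e pq by (simp add: insert_commute)
  next
    case False
    thus ?thesis using card_edge_Int_outside[of p J q] e pq by (simp add: insert_commute)
  qed
  thus thesis
    using that pq e(1) by (metis insert_commute)
qed

lemma private_nbr_if_isolated_E3: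
  assumes iso: "isolated_edge (E3 E J) {x, y}" and "x \<in> J" "y \<notin> J"
  shows "private_nbr V E J y x"
proof -
  have "{x, y} \<in> E"
    using iso by (simp add: isolated_edge_def E3_def)
  hence "x \<in> Jnbrs J y" "y \<in> V"
    using \<open>x \<in> J\<close> edge_ends by (auto simp: Jnbrs_def)
  moreover have "card (Jnbrs J y) = 1"
    using iso \<open>y \<notin> J\<close> by (simp add: isolated_edge_def deg_def nbrs_E3_outside)
  ultimately show ?thesis
    using \<open>y \<notin> J\<close> by (metis private_nbr_iff Diff_iff card_1_singletonE singletonD)
qed

lemma E4_subset_E: "E4 E J \<subseteq> E"
  by (auto simp: E4_def)

lemma finite_E4: "finite (E4 E J)"
  using finite_subset[OF E4_subset_E finite_E] .

lemma E4_empty: "E4 E {} = {}"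
  using simple by (force simp: E4_def simple_graph_def)

lemma E4_subset_if_new_vertices_isolated:
  assumes "\<forall>p\<in>J' - J. Jnbrs J' p = {}"
  shows "E4 E J' \<subseteq> E4 E J"
proof
  fix e assume "e \<in> E4 E J'"
  hence e: "e \<in> E" "e \<subseteq> J'" by (simp_all add: E4_def)
  obtain x y where xy: "e = {x, y}" "x \<noteq> y"
    using e(1) by (rule edge_obtain)
  have "x \<in> J" using assms xy e by (auto simp: Jnbrs_def insert_commute)
  moreover have "y \<in> J" using assms xy e by (auto simp: Jnbrs_def)
  ultimately show "e \<in> E4 E J" using xy e by (simp add: E4_def)
qed

lemma E4_insert: "E4 E (insert a J) = E4 E J \<union> (\<lambda>w. {w, a}) ` Jnbrs J a"
proof
  show "E4 E (insert a J) \<subseteq> E4 E J \<union> (\<lambda>w. {w, a}) ` Jnbrs J a"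
  proof
    fix e assume "e \<in> E4 E (insert a J)"
    hence e: "e \<in> E" "e \<subseteq> insert a J" by (simp_all add: E4_def)
    obtain x y where xy: "e = {x, y}" "x \<noteq> y"
      using e(1) by (rule edge_obtain)
    show "e \<in> E4 E J \<union> (\<lambda>w. {w, a}) ` Jnbrs J a"
    proof (cases "a \<in> e")
      case False
      thus ?thesis using e by (auto simp: E4_def)
    next
      case True
      then obtain w where w: "e = {w, a}" "w \<noteq> a"
        using xy by (metis insert_commute insertE singletonD)
      hence "w \<in> Jnbrs J a"
        using e by (auto simp: Jnbrs_def)
      thus ?thesis using w by blast
    qed
  qed
  show "E4 E J \<union> (\<lambda>w. {w, a}) ` Jnbrs J a \<subseteq> E4 E (insert a J)"
    by (auto simp: E4_def Jnbrs_def)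
qed

lemma two_le_card_if_E4_edge_subset:
  assumes "e \<in> E4 E J" "e \<subseteq> A" "finite A"
  shows "2 \<le> card A"
proof -
  have "card e = 2"
    using assms(1) simple by (auto simp: E4_def simple_graph_def)
  thus ?thesis
    using card_mono[OF assms(3,2)] by simp
qed

definition E4_witness :: "'a set \<Rightarrow> ('a set \<Rightarrow> 'a) \<Rightarrow> bool" where
  "E4_witness J ie \<longleftrightarrow>
     inj_on ie (E4 E J) \<and> (\<forall>e\<in>E4 E J. ie e \<in> V - J \<and> e \<subseteq> Jnbrs J (ie e))"

definition admissible :: "'a set \<Rightarrow> bool" where
  "admissible J \<longleftrightarrow>
     J \<subseteq> V \<and> (\<forall>j\<in>J. card (nbrs (E4 E J) j) \<le> 1) \<and> (\<exists>ie. E4_witness J ie)"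

lemma admissible_empty: "admissible {}"
  by (simp add: admissible_def E4_witness_def E4_empty)

lemma admissible_finite: "admissible J \<Longrightarrow> finite J"
  using finite_V by (auto simp: admissible_def intro: finite_subset)

text \<open>The first condition keeps new edges out of E_{J,4}; the second keeps the old witnesses
  outside J', since a witness is adjacent to two vertices of J.\<close>
lemma admissible_if_new_vertices_isolated:
  assumes adm: "admissible J" and "J' \<subseteq> V"
    and isolated: "\<forall>p\<in>J' - J. Jnbrs J' p = {}"
    and sparse: "\<forall>p\<in>J' - J. card (Jnbrs J p) \<le> 1"
  shows "admissible J'"
proof -
  have sub: "E4 E J' \<subseteq> E4 E J"
    using isolated by (rule E4_subset_if_new_vertices_isolated)
  have matching: "card (nbrs (E4 E J') v) \<le> 1" if "v \<in> J'" for v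
  proof (cases "v \<in> J")
    case True
    have "nbrs (E4 E J') v \<subseteq> nbrs (E4 E J) v"
      using sub by (auto simp: nbrs_def)
    hence "card (nbrs (E4 E J') v) \<le> card (nbrs (E4 E J) v)"
      by (rule card_mono[rotated]) (rule finite_nbrs[OF E4_subset_E])
    also have "\<dots> \<le> 1"
      using adm True by (simp add: admissible_def)
    finally show ?thesis .
  next
    case False
    hence "nbrs (E4 E J') v = {}"
      using sub by (auto simp: nbrs_def E4_def)
    thus ?thesis by simp
  qed
  obtain ie where ie: "E4_witness J ie"
    using adm by (auto simp: admissible_def)
  have "E4_witness J' ie"
    unfolding E4_witness_def
  proof (intro conjI ballI)
    show "inj_on ie (E4 E J')"
      using ie sub by (auto simp: E4_witness_def intro: inj_on_subset)
    fix e assume e: "e \<in> E4 E J'"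
    hence old: "ie e \<in> V - J" "e \<subseteq> Jnbrs J (ie e)"
      using ie sub by (auto simp: E4_witness_def)
    have "2 \<le> card (Jnbrs J (ie e))"
      using two_le_card_if_E4_edge_subset[OF subsetD[OF sub e] old(2) finite_Jnbrs] .
    hence "ie e \<notin> J' - J"
      using sparse by force
    thus "ie e \<in> V - J'"
      using old(1) by blast
    show "e \<subseteq> Jnbrs J' (ie e)"
      using e old(2) by (auto simp: E4_def Jnbrs_def)
  qed
  thus ?thesis
    using assms(2) matching by (auto simp: admissible_def)
qed

lemma admissible_swap:
  assumes adm: "admissible J" and priv: "private_nbr V E J p x"
  defines "J' \<equiv> insert p (J - {x})"
  shows "admissible J'" "E4 E J' \<subseteq> E4 E J" "card J' = card J"
proof -
  have p: "p \<in> V - J" and N: "Jnbrs J p = {x}"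
    using priv by (simp_all add: private_nbr_iff)
  hence x: "x \<in> J" by (auto simp: Jnbrs_def)
  have new: "J' - J = {p}"
    using p by (auto simp: J'_def)
  have "Jnbrs J' p = {}"
    using N by (simp add: J'_def singleton_not_edge)
  hence isolated: "\<forall>q\<in>J' - J. Jnbrs J' q = {}"
    by (simp add: new)
  have "J' \<subseteq> V"
    using adm p by (auto simp: J'_def admissible_def)
  thus "admissible J'"
    using N by (intro admissible_if_new_vertices_isolated[OF adm _ isolated]) (simp_all add: new)
  show "E4 E J' \<subseteq> E4 E J"
    using isolated by (rule E4_subset_if_new_vertices_isolated)
  show "card J' = card J"
    using p x admissible_finite[OF adm] by (simp add: J'_def card_Suc_Diff1 del: card_Diff_insert)
qed

definition potential :: "'a set \<Rightarrow> int \<times> nat \<times> nat" where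
  "potential J = (int (card J) - int (card (E4 E J)), card J, sum (deg E) J)"

definition maximal_admissible :: "'a set \<Rightarrow> bool" where
  "maximal_admissible J \<longleftrightarrow>
     admissible J \<and> (\<forall>J'. admissible J' \<longrightarrow> \<not> potential J < potential J')"

lemma maximal_admissible_exists: "\<exists>J. maximal_admissible J"
proof -
  define C where "C = Collect admissible"
  have "C \<subseteq> Pow V"
    by (auto simp: C_def admissible_def)
  hence fin: "finite C"
    using finite_V by (meson finite_Pow_iff finite_subset)
  moreover have "{} \<in> C"
    using admissible_empty by (simp add: C_def)
  ultimately have "Max (potential ` C) \<in> potential ` C"
    by (intro Max_in) auto
  then obtain J where "J \<in> C" "potential J = Max (potential ` C)"
    by auto
  moreover have "potential J' \<le> Max (potential ` C)" if "J' \<in> C" for J'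
    using fin that by simp
  ultimately show ?thesis
    by (auto simp: maximal_admissible_def C_def not_less)
qed

lemma card_Jnbrs_insert_le_1:
  assumes "\<forall>v\<in>J. card (Jnbrs J v) \<le> 1" and a: "Jnbrs J a = {j}" and j: "Jnbrs J j = {}"
  shows "\<forall>v\<in>insert a J. card (Jnbrs (insert a J) v) \<le> 1"
proof
  fix v assume v: "v \<in> insert a J"
  have "v = a \<or> v = j \<or> (v \<in> J \<and> {a, v} \<notin> E)"
  proof (cases "v = a \<or> v = j")
    case False
    hence "v \<in> J" "v \<notin> Jnbrs J a"
      using v a by auto
    thus ?thesis
      by (simp add: Jnbrs_def insert_commute)
  qed blast
  then consider "v = a" | "v = j" | "v \<in> J" "{a, v} \<notin> E"
    by blast
  thus "card (Jnbrs (insert a J) v) \<le> 1"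
  proof cases
    case 1
    thus ?thesis using a by (simp add: singleton_not_edge)
  next
    case 2
    have "{a, j} \<in> E"
      using a by (auto simp: Jnbrs_def insert_commute)
    thus ?thesis using 2 j by simp
  next
    case 3
    thus ?thesis using assms(1) by simp
  qed
qed

text \<open>If the two private neighbours a, b of j are adjacent, adding a creates the single new inner
  edge {j, a}, and b serves as its witness.\<close>
lemma admissible_insert_private:
  assumes adm: "admissible J"
    and a: "private_nbr V E J a j" and b: "private_nbr V E J b j" and "a \<noteq> b"
    and ab: "{a, b} \<in> E" and j_isolated: "Jnbrs J j = {}"
  defines "J' \<equiv> insert a J"
  shows "admissible J'" "E4 E J' = insert {j, a} (E4 E J)" "{j, a} \<notin> E4 E J"
proof -
  have aN: "a \<in> V - J" "Jnbrs J a = {j}" and bN: "b \<in> V - J" "Jnbrs J b = {j}"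
    using a b by (simp_all add: private_nbr_iff)
  hence j: "j \<in> J" "{j, a} \<in> E" "{j, b} \<in> E"
    by (auto simp: Jnbrs_def)
  show new: "{j, a} \<notin> E4 E J"
    using aN by (auto simp: E4_def)
  show E4': "E4 E J' = insert {j, a} (E4 E J)"
    using aN by (simp add: J'_def E4_insert)
  obtain ie where ie: "E4_witness J ie"
    using adm by (auto simp: admissible_def)
  have not_a: "ie e \<noteq> a" and not_b: "ie e \<noteq> b" if "e \<in> E4 E J" for e
  proof -
    have "2 \<le> card (Jnbrs J (ie e))"
      using that ie by (intro two_le_card_if_E4_edge_subset[OF that _ finite_Jnbrs])
        (simp add: E4_witness_def)
    thus "ie e \<noteq> a" "ie e \<noteq> b"
      using aN bN by auto
  qed
  have "E4_witness J' (ie({j, a} := b))"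
    unfolding E4_witness_def E4'
  proof (rule conjI[OF _ ballI])
    show "inj_on (ie({j, a} := b)) (insert {j, a} (E4 E J))"
      using ie new not_b by (auto simp: E4_witness_def inj_on_def)
    fix e assume "e \<in> insert {j, a} (E4 E J)"
    then consider "e = {j, a}" | "e \<in> E4 E J" "e \<noteq> {j, a}"
      by blast
    thus "(ie({j, a} := b)) e \<in> V - J' \<and> e \<subseteq> Jnbrs J' ((ie({j, a} := b)) e)"
    proof cases
      case 1
      thus ?thesis
        using bN j ab \<open>a \<noteq> b\<close> by (auto simp: J'_def Jnbrs_def insert_commute)
    next
      case 2
      thus ?thesis
        using ie not_a by (auto simp: E4_witness_def J'_def Jnbrs_def)
    qed
  qed
  moreover have "\<forall>v\<in>J'. card (Jnbrs J' v) \<le> 1"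
    using adm aN j_isolated unfolding J'_def
    by (intro card_Jnbrs_insert_le_1) (auto simp: admissible_def nbrs_E4)
  ultimately show "admissible J'"
    using adm aN by (auto simp: admissible_def nbrs_E4 J'_def)
qed

lemma admissible_replace_by_private_pair:
  assumes adm: "admissible J"
    and a: "private_nbr V E J a j" and b: "private_nbr V E J b j" and "a \<noteq> b"
    and ab: "{a, b} \<notin> E"
  defines "J' \<equiv> insert a (insert b (J - {j}))"
  shows "admissible J'" "E4 E J' \<subseteq> E4 E J" "card J' = Suc (card J)"
proof -
  have aN: "a \<in> V - J" "Jnbrs J a = {j}" and bN: "b \<in> V - J" "Jnbrs J b = {j}"
    using a b by (simp_all add: private_nbr_iff)
  hence j: "j \<in> J" by (auto simp: Jnbrs_def)
  have "{b, a} \<notin> E"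
    using ab by (simp add: insert_commute)
  hence "Jnbrs J' a = {}" "Jnbrs J' b = {}"
    using ab aN bN by (simp_all add: J'_def singleton_not_edge)
  moreover have new: "J' - J = {a, b}"
    using aN bN by (auto simp: J'_def)
  ultimately have isolated: "\<forall>p\<in>J' - J. Jnbrs J' p = {}"
    by simp
  have "J' \<subseteq> V"
    using adm aN bN by (auto simp: J'_def admissible_def)
  moreover have "\<forall>p\<in>J' - J. card (Jnbrs J p) \<le> 1"
    unfolding new using aN bN by simp
  ultimately show "admissible J'"
    by (rule admissible_if_new_vertices_isolated[OF adm _ isolated])
  show "E4 E J' \<subseteq> E4 E J"
    using isolated by (rule E4_subset_if_new_vertices_isolated)
  show "card J' = Suc (card J)"
    using aN bN j \<open>a \<noteq> b\<close> admissible_finite[OF adm]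
    by (simp add: J'_def card_Suc_Diff1 del: card_Diff_insert)
qed

context
  fixes J assumes max: "maximal_admissible J"
begin

lemma admissible_if_maximal: "admissible J"
  using max by (simp add: maximal_admissible_def)

lemma maximal_not_less: "admissible J' \<Longrightarrow> \<not> potential J < potential J'"
  using max by (simp add: maximal_admissible_def)

lemma maximal_finite: "finite J"
  using admissible_finite[OF admissible_if_maximal] .

lemma maximal_dominating:
  assumes u: "u \<in> V - J"
  shows "Jnbrs J u \<noteq> {}"
proof
  assume N: "Jnbrs J u = {}"
  define J' where "J' = insert u J"
  have new: "J' - J = {u}"
    using u by (auto simp: J'_def)
  have "Jnbrs J' u = {}"
    using N by (simp add: J'_def singleton_not_edge)
  hence isolated: "\<forall>p\<in>J' - J. Jnbrs J' p = {}"
    by (simp add: new)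
  have "J' \<subseteq> V"
    using admissible_if_maximal u by (auto simp: J'_def admissible_def)
  hence "admissible J'"
    using N by (intro admissible_if_new_vertices_isolated[OF admissible_if_maximal _ isolated])
      (simp_all add: new)
  moreover have "E4 E J' = E4 E J"
    using N by (simp add: J'_def E4_insert)
  moreover have "card J' = Suc (card J)"
    using u maximal_finite by (simp add: J'_def)
  ultimately show False
    using maximal_not_less[of J'] by (simp add: potential_def)
qed

lemma maximal_no_private_on_E4:
  assumes e: "e \<in> E4 E J" and x: "x \<in> e"
  shows "\<not> private_nbr V E J p x"
proof
  assume priv: "private_nbr V E J p x"
  define J' where "J' = insert p (J - {x})"
  note swap = admissible_swap[OF admissible_if_maximal priv, folded J'_def]
  have "p \<noteq> x"
    using priv e x by (auto simp: private_nbr_def E4_def)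
  hence "e \<notin> E4 E J'"
    using x by (auto simp: E4_def J'_def)
  hence "card (E4 E J') < card (E4 E J)"
    using swap(2) e finite_E4 by (intro psubset_card_mono) auto
  thus False
    using maximal_not_less[OF swap(1)] swap(3) by (simp add: potential_def)
qed

lemma maximal_private_owner_isolated:
  assumes "private_nbr V E J p x"
  shows "Jnbrs J x = {}"
proof -
  have "x \<in> J"
    using assms by (auto simp: private_nbr_iff Jnbrs_def)
  hence "{w, x} \<in> E4 E J" if "w \<in> Jnbrs J x" for w
    using that by (simp add: E4_def Jnbrs_def)
  thus ?thesis
    using maximal_no_private_on_E4 assms by blast
qed

lemma maximal_private_nbr_unique:
  assumes a: "private_nbr V E J a j" and b: "private_nbr V E J b j"
  shows "a = b"
proof (rule ccontr)
  assume "a \<noteq> b"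
  have adm: "admissible J"
    by (rule admissible_if_maximal)
  show False
  proof (cases "{a, b} \<in> E")
    case True
    note ins = admissible_insert_private[OF adm a b \<open>a \<noteq> b\<close> True
        maximal_private_owner_isolated[OF a]]
    have "card (E4 E (insert a J)) = Suc (card (E4 E J))"
      using ins(2,3) finite_E4 by simp
    moreover have "card (insert a J) = Suc (card J)"
      using a maximal_finite by (simp add: private_nbr_def)
    ultimately show False
      using maximal_not_less[OF ins(1)] by (simp add: potential_def)
  next
    case False
    note repl = admissible_replace_by_private_pair[OF adm a b \<open>a \<noteq> b\<close> False]
    have "card (E4 E (insert a (insert b (J - {j})))) \<le> card (E4 E J)"
      using repl(2) finite_E4 by (rule card_mono[rotated])
    thus False
      using maximal_not_less[OF repl(1)] repl(3) by (simp add: potential_def)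
  qed
qed

text \<open>An isolated edge {x, y} of G_{J,3} with x \<in> J makes y a private neighbour of x, so x has no
  neighbour in J and hence degree 1 in G; by niceness y has larger degree, and exchanging x for y
  raises the degree sum.\<close>
lemma maximal_no_isolated_E3:
  assumes nice: "\<forall>e\<in>E. \<not> isolated_edge E e"
  shows "\<not> isolated_edge (E3 E J) e"
proof
  assume iso: "isolated_edge (E3 E J) e"
  then obtain x y where xy: "e = {x, y}" "{x, y} \<in> E" "x \<in> J" "y \<notin> J"
    by (auto simp: isolated_edge_def elim: E3_obtain)
  have deg1: "card (nbrs (E3 E J) x) = 1"
    using iso xy by (auto simp: isolated_edge_def deg_def)
  have priv: "private_nbr V E J y x"
    using iso xy by (intro private_nbr_if_isolated_E3) auto
  hence "Jnbrs J x = {}"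
    by (rule maximal_private_owner_isolated)
  hence "nbrs (E3 E J) x = nbrs E x"
    unfolding nbrs_E3_inside[OF xy(3)] by (auto simp: nbrs_def Jnbrs_def)
  hence degx: "deg E x = 1"
    using deg1 by (simp add: deg_def)
  have "deg E y \<noteq> 1"
    using nice xy degx by (auto simp: isolated_edge_def insert_commute)
  moreover have "deg E y \<noteq> 0"
    using xy finite_nbrs[of E y] by (auto simp: deg_def nbrs_def)
  ultimately have more: "deg E x < deg E y"
    using degx by linarith
  define J' where "J' = insert y (J - {x})"
  note swap = admissible_swap[OF admissible_if_maximal priv, folded J'_def]
  have "sum (deg E) J' = deg E y + sum (deg E) (J - {x})"
    using maximal_finite xy by (simp add: J'_def)
  moreover have "sum (deg E) J = deg E x + sum (deg E) (J - {x})"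
    using sum.remove[OF maximal_finite xy(3)] .
  moreover have "card (E4 E J') \<le> card (E4 E J)"
    using swap(2) finite_E4 by (rule card_mono[rotated])
  ultimately show False
    using maximal_not_less[OF swap(1)] swap(3) more by (auto simp: potential_def)
qed

lemma good_subset_if_maximal:
  assumes nice: "\<forall>e\<in>E. \<not> isolated_edge E e" and "V \<noteq> {}"
  shows "good_subset V E J"
proof -
  have adm: "admissible J"
    by (rule admissible_if_maximal)
  then obtain ie where ie: "E4_witness J ie"
    by (auto simp: admissible_def)
  have "J \<noteq> {}"
    using \<open>V \<noteq> {}\<close> maximal_dominating by (fastforce simp: Jnbrs_def)
  moreover have "card {i. private_nbr V E J i j} \<le> 1" for j
  proof -
    have "finite {i. private_nbr V E J i j}"
      using finite_V by (auto simp: private_nbr_def intro: finite_subset)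
    thus ?thesis
      using maximal_private_nbr_unique by (auto simp: card_le_Suc0_iff_eq)
  qed
  moreover have "\<exists>ie. inj_on ie (E4 E J) \<and> (\<forall>e\<in>E4 E J. ie e \<in> V - J \<and>
      e \<subseteq> nbrs (E3 E J) (ie e) \<and> (\<forall>j\<in>e. \<not> (\<exists>i. private_nbr V E J i j)))"
    using ie maximal_no_private_on_E4
    by (intro exI[of _ ie]) (auto simp: E4_witness_def nbrs_E3_outside)
  moreover have "\<exists>j\<in>J. {v, j} \<in> E" if "e \<in> E2 E J" "v \<in> e" for e v
  proof -
    have "v \<in> V - J"
      using that edge_subset by (auto simp: E2_def isolated_edge_def del_edges_def)
    then obtain j where "j \<in> Jnbrs J v"
      using maximal_dominating by blast
    thus ?thesis
      by (auto simp: Jnbrs_def insert_commute)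
  qed
  ultimately show ?thesis
    using adm maximal_no_isolated_E3[OF nice]
    by (auto simp: good_subset_def admissible_def deg_def)
qed

end

end

theorem lemma4p1:
  fixes V :: "'a set" and E :: "'a set set"
  assumes "nice V E" and "V \<noteq> {}"
  shows "\<exists>J. good_subset V E J"
proof -
  interpret finite_simple_graph V E
    using assms(1) by unfold_locales (simp add: nice_def)
  obtain J where "maximal_admissible J"
    using maximal_admissible_exists by blast
  thus ?thesis
    using good_subset_if_maximal assms by (auto simp: nice_def)
qed

end
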